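(* Let $R$ be a linear subspace of $\mathbb{R}^d$ of dimension $t\le\frac{d}{16(\log d)^2}$, and let $z\in\mathbb{R}^d$ be a Gaussian vector with $\mathbb{E}[z]=0$ and $\mathbb{E}[zz^\top]=\frac1dI$. Then with high probability at least half of the indices $i\in[d]$ satisfy $|(P_{\perp_R}z)_i|\ge\frac{1}{4\sqrt d}$.
   Context: $P_{\perp_R}$ is the orthogonal projection onto the orthogonal complement of $R$. "With high probability" refers to probability tending to $1$ as $d\to\infty$. *)

theory Defs
  imports "HOL-Probability.Probability"
begin

text \<open>Vectors of R^d are represented as functions nat => real; only the
coordinates 0..d-1 are relevant, vectors of R^d are those vanishing outside {..<d}.\<close>

definition vec_d :: "nat \<Rightarrow> (nat \<Rightarrow> real) set" where
  "vec_d d = {x. \<forall>i\<ge>d. x i = 0}"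

definition ip :: "nat \<Rightarrow> (nat \<Rightarrow> real) \<Rightarrow> (nat \<Rightarrow> real) \<Rightarrow> real" where
  "ip d x y = (\<Sum>i<d. x i * y i)"

definition is_subspace :: "nat \<Rightarrow> (nat \<Rightarrow> real) set \<Rightarrow> bool" where
  "is_subspace d R \<longleftrightarrow> R \<subseteq> vec_d d \<and> (\<lambda>_. 0) \<in> R \<and>
     (\<forall>x\<in>R. \<forall>y\<in>R. (\<lambda>i. x i + y i) \<in> R) \<and>
     (\<forall>c::real. \<forall>x\<in>R. (\<lambda>i. c * x i) \<in> R)"

definition lin_span :: "(nat \<Rightarrow> real) set \<Rightarrow> (nat \<Rightarrow> real) set" where
  "lin_span S = {x. \<exists>c. x = (\<lambda>i. \<Sum>v\<in>S. c v * v i)}"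

definition sub_dim :: "(nat \<Rightarrow> real) set \<Rightarrow> nat" where
  "sub_dim R = (LEAST n. \<exists>S. finite S \<and> card S = n \<and> S \<subseteq> R \<and> lin_span S = R)"

definition perp_proj :: "nat \<Rightarrow> (nat \<Rightarrow> real) set \<Rightarrow> (nat \<Rightarrow> real) \<Rightarrow> (nat \<Rightarrow> real)" where
  "perp_proj d R z = (THE w. w \<in> vec_d d \<and> (\<lambda>i. if i < d then z i - w i else 0) \<in> R
                         \<and> (\<forall>r\<in>R. ip d w r = 0))"

text \<open>Centered Gaussian vector in R^d with covariance (1/d) I: independent coordinates
  N(0, 1/d), i.e. standard deviation 1/sqrt d.\<close>
definition gauss_vec :: "nat \<Rightarrow> (nat \<Rightarrow> real) measure" where
  "gauss_vec d = PiM {..<d} (\<lambda>_. density lborel (normal_density 0 (1 / sqrt (real d))))"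

end

theory Submission
  imports Defs "HOL-Real_Asymp.Real_Asymp"
begin

text \<open>Take an orthonormal basis \<open>u\<^sub>1, \<dots>, u\<^sub>m\<close> of \<open>R\<close> (Gram--Schmidt, \<open>m \<le> dim R\<close>), so that
  \<open>P\<^sub>\<perp> z = z - p\<close> with \<open>p = \<Sum>\<^sub>k \<langle>u\<^sub>k, z\<rangle> u\<^sub>k\<close>. Each coordinate of \<open>z\<close> has
  \<open>|z\<^sub>i| \<ge> 1/(2\<surd>d)\<close> with probability at least \<open>0.59\<close>, so by Chebyshev more than \<open>0.55 d\<close>
  coordinates are that large. Since \<open>\<bbbE> |p|\<^sup>2 = m/d\<close>, Markov gives \<open>|p|\<^sup>2 < 1/320\<close> except
  with probability \<open>320 m/d \<le> 20/(ln d)\<^sup>2\<close>, and then fewer than \<open>d/20\<close> coordinates of \<open>p\<close>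
  exceed \<open>1/(4\<surd>d)\<close>. On the remaining at least \<open>d/2\<close> coordinates \<open>|z\<^sub>i - p\<^sub>i| \<ge> 1/(4\<surd>d)\<close>.\<close>

subsection \<open>Inner product and subspaces\<close>

lemma ip_commute: "ip d x y = ip d y x"
  by (simp add: ip_def mult.commute)

lemma ip_sum_right: "ip d x (\<lambda>i. \<Sum>k\<in>F. c k * y k i) = (\<Sum>k\<in>F. c k * ip d x (y k))"
proof -
  have "ip d x (\<lambda>i. \<Sum>k\<in>F. c k * y k i) = (\<Sum>i<d. \<Sum>k\<in>F. c k * (x i * y k i))"
    unfolding ip_def by (simp add: sum_distrib_left mult_ac)
  also have "\<dots> = (\<Sum>k\<in>F. \<Sum>i<d. c k * (x i * y k i))"
    by (rule sum.swap)
  also have "\<dots> = (\<Sum>k\<in>F. c k * ip d x (y k))"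
    unfolding ip_def by (simp add: sum_distrib_left)
  finally show ?thesis .
qed

lemma ip_sum_left: "ip d (\<lambda>i. \<Sum>k\<in>F. c k * y k i) x = (\<Sum>k\<in>F. c k * ip d (y k) x)"
  by (subst ip_commute) (simp add: ip_sum_right ip_commute)

lemma ip_diff_right: "ip d x (\<lambda>i. y i - z i) = ip d x y - ip d x z"
  unfolding ip_def by (simp add: right_diff_distrib sum_subtractf)

lemma ip_diff_left: "ip d (\<lambda>i. y i - z i) x = ip d y x - ip d z x"
  by (subst ip_commute) (simp add: ip_diff_right ip_commute)

lemma ip_scale_left: "ip d (\<lambda>i. c * y i) x = c * ip d y x"
  unfolding ip_def by (simp add: sum_distrib_left mult_ac)

lemma ip_scale_right: "ip d x (\<lambda>i. c * y i) = c * ip d x y"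
  unfolding ip_def by (simp add: sum_distrib_left mult_ac)

lemma ip_self_nonneg: "0 \<le> ip d x x"
  unfolding ip_def by (intro sum_nonneg) auto

lemma ip_self_eq_0D: "ip d x x = 0 \<Longrightarrow> i < d \<Longrightarrow> x i = 0"
  unfolding ip_def by (subst (asm) sum_nonneg_eq_0_iff) auto

lemma ip_cong:
  "(\<And>i. i < d \<Longrightarrow> x i = x' i) \<Longrightarrow> (\<And>i. i < d \<Longrightarrow> y i = y' i) \<Longrightarrow> ip d x y = ip d x' y'"
  unfolding ip_def by (intro sum.cong) auto

lemma is_subspace_zero: "is_subspace d R \<Longrightarrow> (\<lambda>_. 0) \<in> R"
  unfolding is_subspace_def by simp

lemma is_subspace_add: "is_subspace d R \<Longrightarrow> x \<in> R \<Longrightarrow> y \<in> R \<Longrightarrow> (\<lambda>i. x i + y i) \<in> R"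
  unfolding is_subspace_def by simp

lemma is_subspace_scale: "is_subspace d R \<Longrightarrow> x \<in> R \<Longrightarrow> (\<lambda>i. c * x i) \<in> R"
  unfolding is_subspace_def by simp

lemma is_subspace_vanishes: "is_subspace d R \<Longrightarrow> x \<in> R \<Longrightarrow> d \<le> i \<Longrightarrow> x i = 0"
  unfolding is_subspace_def vec_d_def by auto

lemma is_subspace_sum:
  assumes R: "is_subspace d R" and "finite F" "\<forall>k\<in>F. y k \<in> R"
  shows "(\<lambda>i. \<Sum>k\<in>F. c k * y k i) \<in> R"
  using assms(2,3)
proof (induction F rule: finite_induct)
  case empty
  then show ?case using is_subspace_zero[OF R] by simp
next
  case (insert a F)
  have "(\<lambda>i. c a * y a i) \<in> R" "(\<lambda>i. \<Sum>k\<in>F. c k * y k i) \<in> R"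
    using is_subspace_scale[OF R] insert by auto
  then have "(\<lambda>i. c a * y a i + (\<Sum>k\<in>F. c k * y k i)) \<in> R"
    using is_subspace_add[OF R] by blast
  then show ?case using insert by simp
qed

lemma is_subspace_diff:
  assumes R: "is_subspace d R" and "x \<in> R" "y \<in> R"
  shows "(\<lambda>i. x i - y i) \<in> R"
proof -
  have "(\<lambda>i. (-1) * y i) \<in> R" using is_subspace_scale R assms by blast
  then have "(\<lambda>i. x i + (-1) * y i) \<in> R" using is_subspace_add R assms by blast
  then show ?thesis by simp
qed

subsection \<open>Orthonormal families and the projection onto their span\<close>

definition orthonormal :: "nat \<Rightarrow> (nat \<Rightarrow> nat \<Rightarrow> real) \<Rightarrow> nat \<Rightarrow> bool" where
  "orthonormal d U m \<longleftrightarrow> (\<forall>j<m. \<forall>k<m. ip d (U j) (U k) = (if j = k then 1 else 0))"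

definition span_proj :: "nat \<Rightarrow> (nat \<Rightarrow> nat \<Rightarrow> real) \<Rightarrow> nat \<Rightarrow> (nat \<Rightarrow> real) \<Rightarrow> nat \<Rightarrow> real" where
  "span_proj d U m v = (\<lambda>i. \<Sum>k<m. ip d (U k) v * U k i)"

lemma span_proj_in_subspace:
  "is_subspace d R \<Longrightarrow> \<forall>k<m. U k \<in> R \<Longrightarrow> span_proj d U m v \<in> R"
  unfolding span_proj_def by (rule is_subspace_sum) auto

lemma ip_basis_span_proj:
  assumes U: "orthonormal d U m" and j: "j < m"
  shows "ip d (U j) (span_proj d U m v) = ip d (U j) v"
proof -
  have "ip d (U j) (span_proj d U m v) = (\<Sum>k<m. ip d (U k) v * ip d (U j) (U k))"
    unfolding span_proj_def by (rule ip_sum_right)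
  also have "\<dots> = (\<Sum>k<m. if k = j then ip d (U j) v else 0)"
    using U j unfolding orthonormal_def by (intro sum.cong) auto
  also have "\<dots> = ip d (U j) v"
    using j by simp
  finally show ?thesis .
qed

lemma ip_span_proj_left: "ip d (span_proj d U m x) y = (\<Sum>k<m. ip d (U k) x * ip d (U k) y)"
  unfolding span_proj_def by (simp add: ip_sum_left)

lemma ip_span_proj_right: "ip d x (span_proj d U m y) = (\<Sum>k<m. ip d (U k) y * ip d x (U k))"
  unfolding span_proj_def by (simp add: ip_sum_right)

lemma ip_span_proj_self:
  "orthonormal d U m \<Longrightarrow> ip d (span_proj d U m x) (span_proj d U m x) = (\<Sum>k<m. (ip d (U k) x)\<^sup>2)"
  by (simp add: ip_span_proj_left ip_basis_span_proj power2_eq_square)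

lemma span_proj_fun_upd_Suc:
  "span_proj d (U(m := u)) (Suc m) v = (\<lambda>i. span_proj d U m v i + ip d u v * u i)"
  unfolding span_proj_def by (auto simp: fun_eq_iff intro!: sum.cong)

lemma span_proj_lin_comb:
  "span_proj d U m (\<lambda>i. \<Sum>v\<in>F. c v * y v i) = (\<lambda>i. \<Sum>v\<in>F. c v * span_proj d U m (y v) i)"
proof
  fix i
  have "span_proj d U m (\<lambda>i. \<Sum>v\<in>F. c v * y v i) i
      = (\<Sum>k<m. \<Sum>v\<in>F. c v * ip d (U k) (y v) * U k i)"
    unfolding span_proj_def by (simp add: ip_sum_right sum_distrib_right)
  also have "\<dots> = (\<Sum>v\<in>F. \<Sum>k<m. c v * ip d (U k) (y v) * U k i)"
    by (rule sum.swap)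
  also have "\<dots> = (\<Sum>v\<in>F. c v * span_proj d U m (y v) i)"
    unfolding span_proj_def by (simp add: sum_distrib_left mult_ac)
  finally show "span_proj d U m (\<lambda>i. \<Sum>v\<in>F. c v * y v i) i = (\<Sum>v\<in>F. c v * span_proj d U m (y v) i)" .
qed

lemma bessel_inequality:
  assumes U: "orthonormal d U m"
  shows "(\<Sum>k<m. (ip d (U k) x)\<^sup>2) \<le> ip d x x"
proof -
  define y where "y = span_proj d U m x"
  have yx: "ip d y x = (\<Sum>k<m. (ip d (U k) x)\<^sup>2)"
    unfolding y_def by (simp add: ip_span_proj_left power2_eq_square)
  have "0 \<le> ip d (\<lambda>i. x i - y i) (\<lambda>i. x i - y i)"
    by (rule ip_self_nonneg)
  also have "\<dots> = ip d x x - ip d y x - ip d x y + ip d y y"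
    by (simp add: ip_diff_left ip_diff_right)
  finally show ?thesis
    using yx ip_span_proj_self[OF U, of x] ip_commute[of d x y] unfolding y_def by linarith
qed

lemma orthonormal_le_dim:
  assumes U: "orthonormal d U m"
  shows "m \<le> d"
proof -
  define e :: "nat \<Rightarrow> nat \<Rightarrow> real" where "e = (\<lambda>i j. if j = i then 1 else 0)"
  have "real m = (\<Sum>k<m. \<Sum>i<d. (U k i)\<^sup>2)"
    using U unfolding orthonormal_def ip_def by (simp add: power2_eq_square)
  also have "\<dots> = (\<Sum>i<d. \<Sum>k<m. (ip d (U k) (e i))\<^sup>2)"
    by (subst sum.swap) (simp add: ip_def e_def if_distrib cong: if_cong)
  also have "\<dots> \<le> (\<Sum>i<d. ip d (e i) (e i))"
    by (intro sum_mono bessel_inequality[OF U])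
  also have "\<dots> = real d"
    unfolding ip_def e_def by (simp add: if_distrib cong: if_cong)
  finally show ?thesis by simp
qed

lemma orthonormal_inj_on:
  assumes U: "orthonormal d U m"
  shows "inj_on U {..<m}"
proof (rule inj_onI)
  fix j k assume j: "j \<in> {..<m}" and k: "k \<in> {..<m}" and "U j = U k"
  then have "ip d (U j) (U k) = 1"
    using U unfolding orthonormal_def by simp
  then show "j = k"
    using U j k unfolding orthonormal_def by (auto split: if_splits)
qed

lemma orthonormal_fun_upd_Suc:
  assumes U: "orthonormal d U m" and uu: "ip d u u = 1" and uU: "\<And>j. j < m \<Longrightarrow> ip d u (U j) = 0"
  shows "orthonormal d (U(m := u)) (Suc m)"
  unfolding orthonormal_def
proof (intro allI impI)
  fix j k assume "j < Suc m" "k < Suc m"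
  then consider "j = m" "k = m" | "j = m" "k < m" | "j < m" "k = m" | "j < m" "k < m"
    by linarith
  then show "ip d ((U(m := u)) j) ((U(m := u)) k) = (if j = k then 1 else 0)"
  proof cases
    case 3
    then show ?thesis using uU[of j] by (simp add: ip_commute)
  qed (use U uu uU in \<open>auto simp: orthonormal_def\<close>)
qed

lemma orthonormal_extend:
  assumes R: "is_subspace d R" and U: "orthonormal d U m" and UR: "\<forall>k<m. U k \<in> R"
    and x: "x \<in> R" and ne: "span_proj d U m x \<noteq> x"
  obtains u where "u \<in> R" "orthonormal d (U(m := u)) (Suc m)"
    "span_proj d (U(m := u)) (Suc m) x = x"
    "\<And>v. span_proj d U m v = v \<Longrightarrow> span_proj d (U(m := u)) (Suc m) v = v"
proof -
  define r where "r = (\<lambda>i. x i - span_proj d U m x i)"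
  have rR: "r \<in> R"
    unfolding r_def by (rule is_subspace_diff[OF R x span_proj_in_subspace[OF R UR]])
  have rU: "ip d (U j) r = 0" if "j < m" for j
    unfolding r_def using ip_basis_span_proj[OF U that] by (simp add: ip_diff_right)
  obtain i where i: "span_proj d U m x i \<noteq> x i"
    using ne by auto
  then have "i < d"
    using is_subspace_vanishes[OF R span_proj_in_subspace[OF R UR]] is_subspace_vanishes[OF R x]
    by (metis not_le)
  moreover have "r i \<noteq> 0"
    using i unfolding r_def by simp
  ultimately have pos: "ip d r r > 0"
    using ip_self_eq_0D[of d r i] ip_self_nonneg[of d r] by linarith
  define n where "n = sqrt (ip d r r)"
  have n: "n > 0" "n * n = ip d r r"
    unfolding n_def using pos by simp_all
  define u where "u = (\<lambda>i. (1 / n) * r i)"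
  have uR: "u \<in> R"
    unfolding u_def by (rule is_subspace_scale[OF R rR])
  have uu: "ip d u u = 1" and ur: "ip d u r = n"
    using n pos unfolding u_def ip_scale_left ip_scale_right by (simp_all add: field_simps)
  have uU: "ip d u (U j) = 0" if "j < m" for j
    unfolding u_def ip_scale_left using rU[OF that] by (simp add: ip_commute)
  have u_proj: "ip d u (span_proj d U m v) = 0" for v
    using uU by (simp add: ip_span_proj_right)
  have "ip d u x = ip d u (\<lambda>i. r i + span_proj d U m x i)"
    by (simp add: r_def)
  also have "\<dots> = ip d u r + ip d u (span_proj d U m x)"
    by (simp add: ip_def sum.distrib algebra_simps)
  finally have "ip d u x = n"
    using ur u_proj by simp
  then have "span_proj d (U(m := u)) (Suc m) x = x"
    unfolding span_proj_fun_upd_Suc using n by (auto simp: fun_eq_iff u_def r_def)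
  moreover have "span_proj d (U(m := u)) (Suc m) v = v" if "span_proj d U m v = v" for v
    using u_proj[of v] that unfolding span_proj_fun_upd_Suc by simp
  ultimately show ?thesis
    using that uR orthonormal_fun_upd_Suc[OF U uu uU] by blast
qed

lemma gram_schmidt:
  assumes R: "is_subspace d R" and "finite S" "S \<subseteq> R"
  shows "\<exists>m U. m \<le> card S \<and> orthonormal d U m \<and> (\<forall>k<m. U k \<in> R) \<and> (\<forall>v\<in>S. span_proj d U m v = v)"
  using assms(2,3)
proof (induction S rule: finite_induct)
  case empty
  show ?case by (rule exI[of _ 0]) (simp add: orthonormal_def)
next
  case (insert x F)
  then obtain m U where mU: "m \<le> card F" "orthonormal d U m" "\<forall>k<m. U k \<in> R"
      "\<forall>v\<in>F. span_proj d U m v = v"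
    by auto
  show ?case
  proof (cases "span_proj d U m x = x")
    case True
    then show ?thesis using mU insert by (intro exI[of _ m] exI[of _ U]) auto
  next
    case False
    with orthonormal_extend[OF R mU(2,3)] insert obtain u where
      u: "u \<in> R" "orthonormal d (U(m := u)) (Suc m)" "span_proj d (U(m := u)) (Suc m) x = x"
         "\<And>v. span_proj d U m v = v \<Longrightarrow> span_proj d (U(m := u)) (Suc m) v = v"
      by blast
    have "Suc m \<le> card (insert x F)" "\<forall>k<Suc m. (U(m := u)) k \<in> R"
      "\<forall>v\<in>insert x F. span_proj d (U(m := u)) (Suc m) v = v"
      using mU u insert by auto
    with u(2) show ?thesis by blast
  qed
qed

lemma lin_span_orthonormal_eq:
  assumes R: "is_subspace d R" and U: "orthonormal d U m" and UR: "\<forall>k<m. U k \<in> R"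
    and fixes_R: "\<forall>x\<in>R. span_proj d U m x = x"
  shows "lin_span (U ` {..<m}) = R"
proof (intro equalityI subsetI)
  fix x assume "x \<in> lin_span (U ` {..<m})"
  then obtain c where "x = (\<lambda>i. \<Sum>v\<in>U ` {..<m}. c v * v i)"
    unfolding lin_span_def by blast
  moreover have "(\<lambda>i. \<Sum>v\<in>U ` {..<m}. c v * id v i) \<in> R"
    by (rule is_subspace_sum[OF R]) (use UR in auto)
  ultimately show "x \<in> R" by simp
next
  fix x assume x: "x \<in> R"
  have "x = (\<lambda>i. \<Sum>k<m. ip d (U k) x * U k i)"
    using fixes_R x unfolding span_proj_def by simp
  also have "\<dots> = (\<lambda>i. \<Sum>v\<in>U ` {..<m}. ip d v x * v i)"
    by (simp add: sum.reindex[OF orthonormal_inj_on[OF U]])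
  finally show "x \<in> lin_span (U ` {..<m})"
    unfolding lin_span_def by (intro CollectI exI[of _ "\<lambda>v. ip d v x"])
qed

text \<open>A maximal orthonormal family in \<open>R\<close> (it has at most \<open>d\<close> members) spans \<open>R\<close>,
  because any vector it does not fix would extend it.\<close>

lemma is_subspace_finite_span:
  assumes R: "is_subspace d R"
  shows "\<exists>S. finite S \<and> S \<subseteq> R \<and> lin_span S = R"
proof -
  define P where "P = (\<lambda>m. \<exists>U. orthonormal d U m \<and> (\<forall>k<m. U k \<in> R))"
  have P_le: "\<And>m. P m \<Longrightarrow> m \<le> d"
    unfolding P_def using orthonormal_le_dim by blast
  define m where "m = Greatest P"
  have "P m"
    unfolding m_def by (rule GreatestI_nat[of P 0 d, OF _ P_le]) (simp add: P_def orthonormal_def)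
  then obtain U where U: "orthonormal d U m" and UR: "\<forall>k<m. U k \<in> R"
    unfolding P_def by blast
  have "span_proj d U m x = x" if x: "x \<in> R" for x
  proof (rule ccontr)
    assume "span_proj d U m x \<noteq> x"
    with orthonormal_extend[OF R U UR x] obtain u where "u \<in> R" "orthonormal d (U(m := u)) (Suc m)"
      by blast
    with UR have "P (Suc m)"
      unfolding P_def by (intro exI[of _ "U(m := u)"]) auto
    then have "Suc m \<le> m"
      unfolding m_def by (rule Greatest_le_nat[OF _ P_le])
    then show False by simp
  qed
  then show ?thesis
    using lin_span_orthonormal_eq[OF R U UR] UR by (intro exI[of _ "U ` {..<m}"]) auto
qed

lemma is_subspace_orthonormal_basis:
  assumes R: "is_subspace d R"
  obtains m U where "m \<le> sub_dim R" "orthonormal d U m" "\<forall>k<m. U k \<in> R"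
    "\<forall>r\<in>R. span_proj d U m r = r"
proof -
  have "\<exists>n S. finite S \<and> card S = n \<and> S \<subseteq> R \<and> lin_span S = R"
    using is_subspace_finite_span[OF R] by blast
  then have "\<exists>S. finite S \<and> card S = sub_dim R \<and> S \<subseteq> R \<and> lin_span S = R"
    unfolding sub_dim_def by (rule LeastI_ex)
  then obtain S where S: "finite S" "card S = sub_dim R" "S \<subseteq> R" "lin_span S = R"
    by blast
  from gram_schmidt[OF R S(1,3)] obtain m U where mU: "m \<le> card S" "orthonormal d U m"
      "\<forall>k<m. U k \<in> R" "\<forall>v\<in>S. span_proj d U m v = v"
    by blast
  have "span_proj d U m r = r" if "r \<in> R" for r
  proof -
    from that S(4) obtain c where rc: "r = (\<lambda>i. \<Sum>v\<in>S. c v * v i)"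
      unfolding lin_span_def by auto
    show ?thesis
      unfolding rc span_proj_lin_comb using mU(4) by simp
  qed
  then show ?thesis
    using that mU S(2) by simp
qed

lemma perp_proj_eqI:
  assumes R: "is_subspace d R" and w: "w \<in> vec_d d"
    and zw: "(\<lambda>i. if i < d then z i - w i else 0) \<in> R" and w_perp: "\<forall>r\<in>R. ip d w r = 0"
  shows "perp_proj d R z = w"
  unfolding perp_proj_def
proof (rule the_equality)
  fix w' assume w': "w' \<in> vec_d d \<and> (\<lambda>i. if i < d then z i - w' i else 0) \<in> R \<and> (\<forall>r\<in>R. ip d w' r = 0)"
  define y where "y = (\<lambda>i. (if i < d then z i - w' i else 0) - (if i < d then z i - w i else 0))"
  have yR: "y \<in> R"
    unfolding y_def using w' zw by (intro is_subspace_diff[OF R]) auto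
  have "ip d y y = ip d w y - ip d w' y"
    unfolding ip_diff_left[symmetric] by (rule ip_cong) (auto simp: y_def)
  then have yy: "ip d y y = 0"
    using w_perp w' yR by simp
  show "w' = w"
  proof
    fix i show "w' i = w i"
      using ip_self_eq_0D[OF yy, of i] w w' by (cases "i < d") (auto simp: y_def vec_d_def)
  qed
qed (use w zw w_perp in blast)

lemma perp_proj_eq_span_proj:
  assumes R: "is_subspace d R" and U: "orthonormal d U m" and UR: "\<forall>k<m. U k \<in> R"
    and fixes_R: "\<forall>r\<in>R. span_proj d U m r = r"
  shows "perp_proj d R z = (\<lambda>i. if i < d then z i - span_proj d U m z i else 0)"
proof (rule perp_proj_eqI[OF R])
  have pR: "span_proj d U m z \<in> R"
    by (rule span_proj_in_subspace[OF R UR])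
  then show "(\<lambda>i. if i < d then z i - (if i < d then z i - span_proj d U m z i else 0) else 0) \<in> R"
    using is_subspace_vanishes[OF R pR] by (auto simp: fun_eq_iff elim!: back_subst[of "\<lambda>x. x \<in> R"])
  show "\<forall>r\<in>R. ip d (\<lambda>i. if i < d then z i - span_proj d U m z i else 0) r = 0"
  proof
    fix r assume r: "r \<in> R"
    have "ip d (\<lambda>i. if i < d then z i - span_proj d U m z i else 0) r
        = ip d (\<lambda>i. z i - span_proj d U m z i) r"
      by (rule ip_cong) auto
    also have "\<dots> = ip d z (span_proj d U m r) - ip d (span_proj d U m z) r"
      using fixes_R r by (simp add: ip_diff_left)
    finally show "ip d (\<lambda>i. if i < d then z i - span_proj d U m z i else 0) r = 0"
      by (simp add: ip_span_proj_left ip_span_proj_right ip_commute mult.commute)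
  qed
qed (simp add: vec_d_def)

subsection \<open>Centred Gaussians\<close>

abbreviation normal_measure :: "real \<Rightarrow> real measure" where
  "normal_measure s \<equiv> density lborel (normal_density 0 s)"

lemma prob_space_normal_measure: "s > 0 \<Longrightarrow> prob_space (normal_measure s)"
  by (rule prob_space_normal_density)

lemma normal_measure_first_moment:
  assumes s: "s > 0"
  shows "integrable (normal_measure s) (\<lambda>x. x)" "integral\<^sup>L (normal_measure s) (\<lambda>x. x) = 0"
proof -
  show "integrable (normal_measure s) (\<lambda>x. x)"
    by (subst integrable_density) (use integrable_normal_moment_nz_1[OF s, of 0] in auto)
  show "integral\<^sup>L (normal_measure s) (\<lambda>x. x) = 0"
    by (subst integral_density) (use integral_normal_moment_nz_1[OF s, of 0] in auto)
qed

lemma normal_measure_second_moment: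
  assumes s: "s > 0"
  shows "integrable (normal_measure s) (\<lambda>x. x\<^sup>2)" "integral\<^sup>L (normal_measure s) (\<lambda>x. x\<^sup>2) = s\<^sup>2"
proof -
  have "integrable lborel (\<lambda>x. normal_density 0 s x * x\<^sup>2)"
    using integrable_normal_moment[OF s, of 0 2] by simp
  then show "integrable (normal_measure s) (\<lambda>x. x\<^sup>2)"
    by (subst integrable_density) auto
  have "integral\<^sup>L lborel (\<lambda>x. normal_density 0 s x * (x - 0) ^ (2 * 1))
      = fact (2 * 1) / ((2 / s\<^sup>2) ^ 1 * fact 1)"
    by (rule integral_normal_moment_even[OF s])
  then have "integral\<^sup>L lborel (\<lambda>x. normal_density 0 s x * x\<^sup>2) = s\<^sup>2"
    using s by (simp add: field_simps power2_eq_square)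
  then show "integral\<^sup>L (normal_measure s) (\<lambda>x. x\<^sup>2) = s\<^sup>2"
    by (subst integral_density) auto
qed

text \<open>The density is at most its value \<open>1 / (s \<surd>(2\<pi>))\<close> at the origin.\<close>

lemma normal_measure_interval_le:
  assumes s: "s > 0" and a: "a > 0"
  shows "measure (normal_measure s) {-a<..<a} \<le> 2 * a / (s * sqrt (2 * pi))"
proof -
  define c where "c = 1 / (s * sqrt (2 * pi))"
  have density_le: "normal_density 0 s x \<le> c" for x
  proof -
    have "exp (- (x - 0)\<^sup>2 / (2 * s\<^sup>2)) \<le> 1" by simp
    moreover have "sqrt (2 * pi * s\<^sup>2) = s * sqrt (2 * pi)"
      using s by (simp add: real_sqrt_mult)
    ultimately show ?thesis
      unfolding normal_density_def c_def using s by (simp add: divide_right_mono)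
  qed
  interpret prob_space "normal_measure s"
    by (rule prob_space_normal_measure[OF s])
  have "emeasure (normal_measure s) {-a<..<a}
      = (\<integral>\<^sup>+ x. ennreal (normal_density 0 s x) * indicator {-a<..<a} x \<partial>lborel)"
    by (rule emeasure_density) auto
  also have "\<dots> \<le> (\<integral>\<^sup>+ x. ennreal c * indicator {-a<..<a} x \<partial>lborel)"
    by (intro nn_integral_mono) (auto simp: density_le indicator_def intro!: ennreal_leI)
  also have "\<dots> = ennreal c * emeasure lborel {-a<..<a}"
    by (rule nn_integral_cmult_indicator) auto
  also have "\<dots> = ennreal c * ennreal (2 * a)"
    using a by simp
  also have "\<dots> = ennreal (c * (2 * a))"
    using a s by (subst ennreal_mult) (auto simp: c_def)
  finally have "ennreal (measure (normal_measure s) {-a<..<a}) \<le> ennreal (c * (2 * a))"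
    by (simp add: emeasure_eq_measure)
  then show ?thesis
    using a s by (subst (asm) ennreal_le_iff) (auto simp: c_def)
qed

lemma normal_measure_abs_ge_half:
  assumes s: "s > 0"
  shows "59 / 100 \<le> measure (normal_measure s) {x. s / 2 \<le> \<bar>x\<bar>}"
proof -
  interpret prob_space "normal_measure s"
    by (rule prob_space_normal_measure[OF s])
  have compl: "{x. s / 2 \<le> \<bar>x\<bar>} = space (normal_measure s) - {-(s / 2)<..<s / 2}"
    by auto
  have "measure (normal_measure s) {x. s / 2 \<le> \<bar>x\<bar>} = 1 - measure (normal_measure s) {-(s / 2)<..<s / 2}"
    unfolding compl by (rule prob_compl) simp
  moreover have "measure (normal_measure s) {-(s / 2)<..<s / 2} \<le> 1 / sqrt (2 * pi)"
    using normal_measure_interval_le[of s "s / 2"] s by simp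
  moreover have "100 / 41 \<le> sqrt (2 * pi)"
  proof -
    have "(100 / 41 :: real) \<le> sqrt 6"
      by (rule real_le_rsqrt) (simp add: power2_eq_square)
    also have "sqrt 6 \<le> sqrt (2 * pi)"
      using pi_gt3 by simp
    finally show ?thesis .
  qed
  then have "1 / sqrt (2 * pi) \<le> 41 / 100"
    by (simp add: field_simps)
  ultimately show ?thesis by linarith
qed

subsection \<open>Independent coordinates\<close>

lemma PiM_integral_prod_coords:
  fixes N :: "'a measure" and f :: "nat \<Rightarrow> 'a \<Rightarrow> real" and d :: nat
  assumes N: "prob_space N" and f: "\<And>k. k < d \<Longrightarrow> integrable N (f k)"
  shows "integrable (PiM {..<d} (\<lambda>_. N)) (\<lambda>z. \<Prod>k<d. f k (z k))"
    "integral\<^sup>L (PiM {..<d} (\<lambda>_. N)) (\<lambda>z. \<Prod>k<d. f k (z k)) = (\<Prod>k<d. integral\<^sup>L N (f k))"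
proof -
  interpret product_prob_space "\<lambda>_. N" "{..<d}"
    unfolding product_prob_space_def product_sigma_finite_def product_prob_space_axioms_def
    using N prob_space_imp_sigma_finite[OF N] by simp
  show "integrable (PiM {..<d} (\<lambda>_. N)) (\<lambda>z. \<Prod>k<d. f k (z k))"
    by (rule product_integrable_prod) (auto intro: f)
  show "integral\<^sup>L (PiM {..<d} (\<lambda>_. N)) (\<lambda>z. \<Prod>k<d. f k (z k)) = (\<Prod>k<d. integral\<^sup>L N (f k))"
    by (rule product_integral_prod) (auto intro: f)
qed

text \<open>The integrand is a product over all coordinates with factor \<open>1\<close> off \<open>{i, j}\<close>;
  for \<open>i = j\<close> the factor at \<open>i\<close> is \<open>g h\<close>, whence \<open>G\<close> and \<open>H\<close>.\<close>

lemma PiM_integral_coord_pair: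
  fixes N :: "'a measure" and g h :: "'a \<Rightarrow> real" and i j d :: nat
  assumes N: "prob_space N" and ij: "i < d" "j < d"
    and g: "integrable N g" and h: "integrable N h"
  defines "G \<equiv> (\<lambda>x. if i = j then g x * h x else g x)"
    and "H \<equiv> (\<lambda>x. if i = j then 1 else h x)"
  assumes gh: "i = j \<Longrightarrow> integrable N (\<lambda>x. g x * h x)"
  shows "integrable (PiM {..<d} (\<lambda>_. N)) (\<lambda>z. g (z i) * h (z j))"
    "integral\<^sup>L (PiM {..<d} (\<lambda>_. N)) (\<lambda>z. g (z i) * h (z j)) = integral\<^sup>L N G * integral\<^sup>L N H"
proof -
  interpret prob_space N by (rule N)
  define f where "f = (\<lambda>k. if k = i then G else if k = j then H else (\<lambda>_. 1 :: real))"
  have f: "\<And>k. k < d \<Longrightarrow> integrable N (f k)"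
    using g h gh by (auto simp: f_def G_def H_def)
  have prod_ij: "(\<Prod>k<d. F k) = (\<Prod>k\<in>{i, j}. F k)"
    if "\<And>k. k \<notin> {i, j} \<Longrightarrow> F k = 1" for F :: "nat \<Rightarrow> real"
    by (rule prod.mono_neutral_right) (use ij that in auto)
  have eq: "(\<lambda>z. \<Prod>k<d. f k (z k)) = (\<lambda>z. g (z i) * h (z j))"
    by (rule ext, subst prod_ij; cases "i = j") (auto simp: f_def G_def H_def)
  have "(\<Prod>k<d. integral\<^sup>L N (f k)) = integral\<^sup>L N G * integral\<^sup>L N H"
    by (subst prod_ij; cases "i = j") (auto simp: f_def G_def H_def prob_space)
  then show "integrable (PiM {..<d} (\<lambda>_. N)) (\<lambda>z. g (z i) * h (z j))"
    "integral\<^sup>L (PiM {..<d} (\<lambda>_. N)) (\<lambda>z. g (z i) * h (z j)) = integral\<^sup>L N G * integral\<^sup>L N H"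
    using PiM_integral_prod_coords[of N d f, OF N f] unfolding eq by simp_all
qed

lemma PiM_integral_square_sum:
  fixes N :: "'a measure" and g :: "nat \<Rightarrow> 'a \<Rightarrow> real" and d :: nat
  assumes N: "prob_space N" and g1: "\<And>i. integrable N (g i)"
    and g2: "\<And>i. integrable N (\<lambda>x. g i x * g i x)" and g0: "\<And>i. integral\<^sup>L N (g i) = 0"
  shows "integrable (PiM {..<d} (\<lambda>_. N)) (\<lambda>z. (\<Sum>i<d. g i (z i))\<^sup>2)"
    "integral\<^sup>L (PiM {..<d} (\<lambda>_. N)) (\<lambda>z. (\<Sum>i<d. g i (z i))\<^sup>2) = (\<Sum>i<d. integral\<^sup>L N (\<lambda>x. g i x * g i x))"
proof -
  interpret prob_space N by (rule N)
  have sq: "(\<lambda>z. (\<Sum>i<d. g i (z i))\<^sup>2) = (\<lambda>z. \<Sum>i<d. \<Sum>j<d. g i (z i) * g j (z j))"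
    by (simp add: power2_eq_square sum_product)
  have gg: "integrable N (\<lambda>x. g i x * g j x)" if "i = j" for i j
    using g2 that by simp
  note pair = PiM_integral_coord_pair[OF N _ _ g1 g1 gg]
  have int: "integrable (PiM {..<d} (\<lambda>_. N)) (\<lambda>z. g i (z i) * g j (z j))" if "i < d" "j < d" for i j
    using pair(1)[OF that] by simp
  have val: "integral\<^sup>L (PiM {..<d} (\<lambda>_. N)) (\<lambda>z. g i (z i) * g j (z j))
      = (if i = j then integral\<^sup>L N (\<lambda>x. g i x * g i x) else 0)" if "i < d" "j < d" for i j
    using pair(2)[OF that] g0 by (simp add: prob_space)
  show "integrable (PiM {..<d} (\<lambda>_. N)) (\<lambda>z. (\<Sum>i<d. g i (z i))\<^sup>2)"
    unfolding sq by (intro Bochner_Integration.integrable_sum int) auto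
  have "integral\<^sup>L (PiM {..<d} (\<lambda>_. N)) (\<lambda>z. (\<Sum>i<d. g i (z i))\<^sup>2)
      = (\<Sum>i<d. \<Sum>j<d. integral\<^sup>L (PiM {..<d} (\<lambda>_. N)) (\<lambda>z. g i (z i) * g j (z j)))"
    unfolding sq using int
    by (subst Bochner_Integration.integral_sum)
      (auto intro!: sum.cong Bochner_Integration.integral_sum Bochner_Integration.integrable_sum)
  also have "\<dots> = (\<Sum>i<d. integral\<^sup>L N (\<lambda>x. g i x * g i x))"
    by (simp add: val if_distrib cong: if_cong)
  finally show "integral\<^sup>L (PiM {..<d} (\<lambda>_. N)) (\<lambda>z. (\<Sum>i<d. g i (z i))\<^sup>2)
      = (\<Sum>i<d. integral\<^sup>L N (\<lambda>x. g i x * g i x))" .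
qed

lemma PiM_integral_ip_square:
  assumes s: "s > 0"
  shows "integrable (PiM {..<d} (\<lambda>_. normal_measure s)) (\<lambda>z. (ip d u z)\<^sup>2)"
    "integral\<^sup>L (PiM {..<d} (\<lambda>_. normal_measure s)) (\<lambda>z. (ip d u z)\<^sup>2) = s\<^sup>2 * ip d u u"
proof -
  note N = prob_space_normal_measure[OF s]
  note moment1 = normal_measure_first_moment[OF s] and moment2 = normal_measure_second_moment[OF s]
  define g where "g = (\<lambda>i (x :: real). u i * x)"
  have g_square: "(\<lambda>x. g i x * g i x) = (\<lambda>x. (u i * u i) * x\<^sup>2)" for i
    unfolding g_def by (simp add: power2_eq_square mult_ac)
  have g1: "\<And>i. integrable (normal_measure s) (g i)"
    and g0: "\<And>i. integral\<^sup>L (normal_measure s) (g i) = 0"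
    unfolding g_def using moment1 by auto
  have g2: "\<And>i. integrable (normal_measure s) (\<lambda>x. g i x * g i x)"
    unfolding g_square using moment2(1) by simp
  have ip_eq: "(\<lambda>z. (ip d u z)\<^sup>2) = (\<lambda>z. (\<Sum>i<d. g i (z i))\<^sup>2)"
    unfolding g_def ip_def ..
  show "integrable (PiM {..<d} (\<lambda>_. normal_measure s)) (\<lambda>z. (ip d u z)\<^sup>2)"
    unfolding ip_eq by (rule PiM_integral_square_sum(1)[OF N g1 g2 g0])
  have "integral\<^sup>L (PiM {..<d} (\<lambda>_. normal_measure s)) (\<lambda>z. (ip d u z)\<^sup>2)
      = (\<Sum>i<d. integral\<^sup>L (normal_measure s) (\<lambda>x. g i x * g i x))"
    unfolding ip_eq by (rule PiM_integral_square_sum(2)[OF N g1 g2 g0])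
  also have "\<dots> = s\<^sup>2 * ip d u u"
    unfolding g_square ip_def using moment2(2) by (simp add: sum_distrib_left mult_ac)
  finally show "integral\<^sup>L (PiM {..<d} (\<lambda>_. normal_measure s)) (\<lambda>z. (ip d u z)\<^sup>2) = s\<^sup>2 * ip d u u" .
qed

subsection \<open>Tail bounds\<close>

lemma real_card_lessThan_filter:
  "real (card {i \<in> {..<d :: nat}. P i}) = (\<Sum>i<d. of_bool (P i))"
proof -
  have "{i \<in> {..<d}. P i} = {..<d} \<inter> {i. P i}"
    by auto
  then show ?thesis by simp
qed

lemma (in prob_space) centered_indicator_moments:
  assumes S: "S \<in> events"
  shows "integrable M (\<lambda>x. indicator S x - prob S)"
    "integrable M (\<lambda>x. (indicator S x - prob S) * (indicator S x - prob S))"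
    "expectation (\<lambda>x. indicator S x - prob S) = 0"
    "expectation (\<lambda>x. (indicator S x - prob S) * (indicator S x - prob S)) \<le> 1"
proof -
  have bounded: "\<bar>indicator S x - prob S\<bar> \<le> 1" for x
    by (auto simp: indicator_def)
  have bounded_sq: "\<bar>(indicator S x - prob S) * (indicator S x - prob S)\<bar> \<le> 1" for x
    unfolding abs_mult by (rule mult_le_one[OF bounded abs_ge_zero bounded])
  show "integrable M (\<lambda>x. indicator S x - prob S)"
    by (rule integrable_const_bound[where B = 1]) (use bounded S in auto)
  show sq: "integrable M (\<lambda>x. (indicator S x - prob S) * (indicator S x - prob S))"
    by (rule integrable_const_bound[where B = 1]) (use bounded_sq S in auto)
  have "integrable M (indicator S :: 'a \<Rightarrow> real)"
    by (rule integrable_const_bound[where B = 1]) (use S in auto)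
  then show "expectation (\<lambda>x. indicator S x - prob S) = 0"
    by (simp add: Bochner_Integration.integral_diff prob_space sets.Int_space_eq2[OF S])
  have "expectation (\<lambda>x. (indicator S x - prob S) * (indicator S x - prob S)) \<le> expectation (\<lambda>x. 1)"
    by (rule integral_mono) (use sq bounded_sq in \<open>auto simp: abs_le_iff\<close>)
  then show "expectation (\<lambda>x. (indicator S x - prob S) * (indicator S x - prob S)) \<le> 1"
    by (simp add: prob_space)
qed

lemma PiM_prob_count_deviation:
  fixes N :: "'a measure" and d :: nat
  assumes N: "prob_space N" and S: "S \<in> sets N" and a: "a > 0"
  shows "measure (PiM {..<d} (\<lambda>_. N))
      {z \<in> space (PiM {..<d} (\<lambda>_. N)). a \<le> \<bar>real (card {i \<in> {..<d}. z i \<in> S}) - real d * measure N S\<bar>}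
    \<le> real d / a\<^sup>2"
proof -
  interpret N: prob_space N by (rule N)
  define g where "g = (\<lambda>(i :: nat) x. indicator S x - measure N S)"
  note moments = N.centered_indicator_moments[OF S]
  have g1: "\<And>i. integrable N (g i)" and g2: "\<And>i. integrable N (\<lambda>x. g i x * g i x)"
    and g0: "\<And>i. integral\<^sup>L N (g i) = 0" and g2_le: "\<And>i. integral\<^sup>L N (\<lambda>x. g i x * g i x) \<le> 1"
    unfolding g_def using moments by simp_all
  define F where "F = (\<lambda>z. (\<Sum>i<d. g i (z i))\<^sup>2)"
  have F: "integrable (PiM {..<d} (\<lambda>_. N)) F"
    unfolding F_def by (rule PiM_integral_square_sum(1)[OF N g1 g2 g0])
  have "integral\<^sup>L (PiM {..<d} (\<lambda>_. N)) F \<le> (\<Sum>i<d. 1)"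
    unfolding F_def PiM_integral_square_sum(2)[OF N g1 g2 g0] by (intro sum_mono g2_le)
  then have F_le: "integral\<^sup>L (PiM {..<d} (\<lambda>_. N)) F \<le> real d"
    by simp
  have "real (card {i \<in> {..<d}. z i \<in> S}) - real d * measure N S = (\<Sum>i<d. g i (z i))" for z
    unfolding g_def real_card_lessThan_filter by (simp add: sum_subtractf indicator_def)
  then have "a \<le> \<bar>real (card {i \<in> {..<d}. z i \<in> S}) - real d * measure N S\<bar> \<longleftrightarrow> a\<^sup>2 \<le> F z" for z
    using abs_le_square_iff[of a] a unfolding F_def by simp
  then have "measure (PiM {..<d} (\<lambda>_. N))
      {z \<in> space (PiM {..<d} (\<lambda>_. N)). a \<le> \<bar>real (card {i \<in> {..<d}. z i \<in> S}) - real d * measure N S\<bar>}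
    \<le> integral\<^sup>L (PiM {..<d} (\<lambda>_. N)) F / a\<^sup>2"
    using integral_Markov_inequality_measure[OF F, of "space (PiM {..<d} (\<lambda>_. N))" "a\<^sup>2"] a
    by (simp add: F_def)
  also have "\<dots> \<le> real d / a\<^sup>2"
    using F_le by (simp add: divide_right_mono)
  finally show ?thesis .
qed

text \<open>Markov's inequality: each \<open>\<langle>u\<^sub>k, z\<rangle>\<^sup>2\<close> has expectation \<open>s\<^sup>2\<close>.\<close>

lemma PiM_prob_span_proj_norm_ge:
  assumes s: "s > 0" and U: "orthonormal d U m" and c: "c > 0"
  shows "measure (PiM {..<d} (\<lambda>_. normal_measure s))
      {z \<in> space (PiM {..<d} (\<lambda>_. normal_measure s)). c \<le> (\<Sum>k<m. (ip d (U k) z)\<^sup>2)}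
    \<le> real m * s\<^sup>2 / c"
proof -
  define Q where "Q = (\<lambda>z. \<Sum>k<m. (ip d (U k) z)\<^sup>2)"
  have Q: "integrable (PiM {..<d} (\<lambda>_. normal_measure s)) Q"
    unfolding Q_def by (intro Bochner_Integration.integrable_sum PiM_integral_ip_square(1)[OF s])
  have "integral\<^sup>L (PiM {..<d} (\<lambda>_. normal_measure s)) Q = (\<Sum>k<m. s\<^sup>2)"
    unfolding Q_def using U
    by (simp add: Bochner_Integration.integral_sum PiM_integral_ip_square[OF s] orthonormal_def)
  then show ?thesis
    using integral_Markov_inequality_measure[OF Q, of "space (PiM {..<d} (\<lambda>_. normal_measure s))" c] c
    by (simp add: Q_def sum_nonneg)
qed

lemma many_coords_survive_small_perturbation:
  fixes z p :: "nat \<Rightarrow> real" and d :: nat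
  assumes \<delta>: "\<delta> > 0"
    and large: "11 / 20 * real d < real (card {i \<in> {..<d}. 2 * \<delta> \<le> \<bar>z i\<bar>})"
    and small: "(\<Sum>i<d. (p i)\<^sup>2) < real d * \<delta>\<^sup>2 / 20"
  shows "d \<le> 2 * card {i \<in> {..<d}. \<delta> \<le> \<bar>z i - p i\<bar>}"
proof -
  define T where "T = {i \<in> {..<d}. 2 * \<delta> \<le> \<bar>z i\<bar>}"
  define W where "W = {i \<in> {..<d}. \<delta> \<le> \<bar>z i - p i\<bar>}"
  define B where "B = {i \<in> {..<d}. \<delta> < \<bar>p i\<bar>}"
  have "T \<subseteq> W \<union> B"
    unfolding T_def W_def B_def by auto
  then have "card T \<le> card (W \<union> B)"
    by (rule card_mono[rotated]) (simp add: W_def B_def)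
  then have "card T \<le> card W + card B"
    using card_Un_le[of W B] by linarith
  have "real (card B) * \<delta>\<^sup>2 = (\<Sum>i\<in>B. \<delta>\<^sup>2)"
    by simp
  also have "\<dots> \<le> (\<Sum>i\<in>B. (p i)\<^sup>2)"
    using \<delta> by (intro sum_mono) (auto simp: B_def abs_le_square_iff[symmetric])
  also have "\<dots> \<le> (\<Sum>i<d. (p i)\<^sup>2)"
    by (intro sum_mono2) (auto simp: B_def)
  finally have "real (card B) * \<delta>\<^sup>2 < (real d / 20) * \<delta>\<^sup>2"
    using small by linarith
  then have "real (card B) < real d / 20"
    by (rule mult_right_less_imp_less) simp
  with \<open>card T \<le> card W + card B\<close> large show ?thesis
    unfolding T_def W_def by linarith
qed

lemma PiM_normal_prob_few_large_coords:
  fixes d :: nat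
  assumes s: "s > 0" and d: "1 \<le> d"
  shows "measure (PiM {..<d} (\<lambda>_. normal_measure s))
      {z \<in> space (PiM {..<d} (\<lambda>_. normal_measure s)).
        real (card {i \<in> {..<d}. s / 2 \<le> \<bar>z i\<bar>}) \<le> 11 / 20 * real d}
    \<le> 625 / real d"
proof -
  define G where "G = PiM {..<d} (\<lambda>_. normal_measure s)"
  interpret G: prob_space G
    unfolding G_def by (rule prob_space_PiM) (simp add: prob_space_normal_measure[OF s])
  define S where "S = {x :: real. s / 2 \<le> \<bar>x\<bar>}"
  define q where "q = measure (normal_measure s) S"
  have q: "real d * (59 / 100) \<le> real d * q"
    unfolding q_def S_def by (intro mult_left_mono normal_measure_abs_ge_half[OF s]) simp
  define B where "B = {z \<in> space G. real d / 25 \<le> \<bar>real (card {i \<in> {..<d}. z i \<in> S}) - real d * q\<bar>}"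
  have "B \<in> sets G"
    unfolding B_def real_card_lessThan_filter G_def S_def by measurable
  moreover have "{z \<in> space G. real (card {i \<in> {..<d}. s / 2 \<le> \<bar>z i\<bar>}) \<le> 11 / 20 * real d} \<subseteq> B"
  proof
    fix z assume "z \<in> {z \<in> space G. real (card {i \<in> {..<d}. s / 2 \<le> \<bar>z i\<bar>}) \<le> 11 / 20 * real d}"
    then have "z \<in> space G" and few: "real (card {i \<in> {..<d}. z i \<in> S}) \<le> 11 / 20 * real d"
      unfolding S_def by auto
    have "real d / 25 \<le> \<bar>real (card {i \<in> {..<d}. z i \<in> S}) - real d * q\<bar>"
      using few q by arith
    with \<open>z \<in> space G\<close> show "z \<in> B"
      unfolding B_def by blast
  qed
  ultimately have "G.prob {z \<in> space G. real (card {i \<in> {..<d}. s / 2 \<le> \<bar>z i\<bar>}) \<le> 11 / 20 * real d}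
      \<le> G.prob B"
    by (intro G.finite_measure_mono)
  also have "\<dots> \<le> real d / (real d / 25)\<^sup>2"
    unfolding B_def q_def G_def
    by (rule PiM_prob_count_deviation) (use d in \<open>auto simp: prob_space_normal_measure[OF s] S_def\<close>)
  also have "\<dots> = 625 / real d"
    by (simp add: power2_eq_square)
  finally show ?thesis
    unfolding G_def .
qed

lemma (in prob_space) prob_ge_one_minus_exceptions:
  assumes "A \<in> events" "B \<in> events" "E \<in> events" and "space M - (A \<union> B) \<subseteq> E"
  shows "1 - prob A - prob B \<le> prob E"
proof -
  have "1 - prob A - prob B \<le> 1 - prob (A \<union> B)"
    using measure_Un_le[OF assms(1,2)] by simp
  also have "\<dots> = prob (space M - (A \<union> B))"
    using assms(1,2) by (simp add: prob_compl)
  also have "\<dots> \<le> prob E"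
    using assms(3,4) by (rule finite_measure_mono[rotated])
  finally show ?thesis .
qed

lemma card_perp_proj_large_coords:
  assumes R: "is_subspace d R" and U: "orthonormal d U m" and UR: "\<forall>k<m. U k \<in> R"
    and fixes_R: "\<forall>r\<in>R. span_proj d U m r = r" and d: "1 \<le> d"
    and large: "11 / 20 * real d < real (card {i \<in> {..<d}. 1 / (2 * sqrt (real d)) \<le> \<bar>z i\<bar>})"
    and small: "(\<Sum>k<m. (ip d (U k) z)\<^sup>2) < 1 / 320"
  shows "d \<le> 2 * card {i \<in> {..<d}. 1 / (4 * sqrt (real d)) \<le> \<bar>perp_proj d R z i\<bar>}"
proof -
  define \<delta> where "\<delta> = 1 / (4 * sqrt (real d))"
  have \<delta>: "\<delta> > 0" "2 * \<delta> = 1 / (2 * sqrt (real d))" "real d * \<delta>\<^sup>2 / 20 = 1 / 320"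
    unfolding \<delta>_def using d by (simp_all add: power_divide power_mult_distrib)
  define p where "p = span_proj d U m z"
  have "(\<Sum>i<d. (p i)\<^sup>2) = ip d p p"
    unfolding ip_def by (simp add: power2_eq_square)
  also have "\<dots> = (\<Sum>k<m. (ip d (U k) z)\<^sup>2)"
    unfolding p_def by (rule ip_span_proj_self[OF U])
  also have "\<dots> < real d * \<delta>\<^sup>2 / 20"
    using small unfolding \<delta>(3) .
  finally have "d \<le> 2 * card {i \<in> {..<d}. \<delta> \<le> \<bar>z i - p i\<bar>}"
    by (rule many_coords_survive_small_perturbation[OF \<delta>(1) large[folded \<delta>(2)]])
  also have "{i \<in> {..<d}. \<delta> \<le> \<bar>z i - p i\<bar>} = {i \<in> {..<d}. \<delta> \<le> \<bar>perp_proj d R z i\<bar>}"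
    using perp_proj_eq_span_proj[OF R U UR fixes_R] unfolding p_def by auto
  finally show ?thesis
    unfolding \<delta>_def .
qed

lemma sets_PiM_many_large_perp_proj_coords:
  assumes R: "is_subspace d R" and U: "orthonormal d U m" and UR: "\<forall>k<m. U k \<in> R"
    and fixes_R: "\<forall>r\<in>R. span_proj d U m r = r"
  shows "{z \<in> space (PiM {..<d} (\<lambda>_. normal_measure s)).
      d \<le> 2 * card {i \<in> {..<d}. c \<le> \<bar>perp_proj d R z i\<bar>}} \<in> sets (PiM {..<d} (\<lambda>_. normal_measure s))"
proof -
  have "card {i \<in> {..<d}. c \<le> \<bar>perp_proj d R z i\<bar>} = card {i \<in> {..<d}. c \<le> \<bar>z i - span_proj d U m z i\<bar>}"
    for z
    using perp_proj_eq_span_proj[OF R U UR fixes_R] by (intro arg_cong[where f = card]) auto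
  then have "{z \<in> space (PiM {..<d} (\<lambda>_. normal_measure s)).
      d \<le> 2 * card {i \<in> {..<d}. c \<le> \<bar>perp_proj d R z i\<bar>}}
    = {z \<in> space (PiM {..<d} (\<lambda>_. normal_measure s)).
      real d \<le> 2 * (\<Sum>i<d. of_bool (c \<le> \<bar>z i - span_proj d U m z i\<bar>))}"
    unfolding real_card_lessThan_filter[symmetric]
    by (simp only: of_nat_le_iff[symmetric, where 'a = real] of_nat_mult of_nat_numeral)
  also have "\<dots> \<in> sets (PiM {..<d} (\<lambda>_. normal_measure s))"
    unfolding span_proj_def ip_def by measurable
  finally show ?thesis .
qed

lemma measure_perp_proj_many_large_coords:
  assumes d: "1 \<le> d" and R: "is_subspace d R"
  shows "1 - 625 / real d - 320 * real (sub_dim R) / real d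
    \<le> measure (gauss_vec d) {z \<in> space (gauss_vec d).
         d \<le> 2 * card {i \<in> {..<d}. 1 / (4 * sqrt (real d)) \<le> \<bar>perp_proj d R z i\<bar>}}"
proof -
  define s where "s = 1 / sqrt (real d)"
  have s: "s > 0" "s\<^sup>2 = 1 / real d" "s / 2 = 1 / (2 * sqrt (real d))"
    unfolding s_def using d by (simp_all add: power_divide)
  define G where "G = PiM {..<d} (\<lambda>_. normal_measure s)"
  interpret G: prob_space G
    unfolding G_def by (rule prob_space_PiM) (simp add: prob_space_normal_measure[OF s(1)])
  obtain m U where mU: "m \<le> sub_dim R" "orthonormal d U m" "\<forall>k<m. U k \<in> R"
    "\<forall>r\<in>R. span_proj d U m r = r"
    using is_subspace_orthonormal_basis[OF R] by blast
  define B1 where "B1 = {z \<in> space G. real (card {i \<in> {..<d}. s / 2 \<le> \<bar>z i\<bar>}) \<le> 11 / 20 * real d}"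
  define B2 where "B2 = {z \<in> space G. 1 / 320 \<le> (\<Sum>k<m. (ip d (U k) z)\<^sup>2)}"
  define E where "E = {z \<in> space G. d \<le> 2 * card {i \<in> {..<d}. 1 / (4 * sqrt (real d)) \<le> \<bar>perp_proj d R z i\<bar>}}"
  have "G.prob B2 \<le> real m * s\<^sup>2 / (1 / 320)"
    unfolding B2_def G_def by (rule PiM_prob_span_proj_norm_ge[OF s(1) mU(2)]) simp
  also have "\<dots> \<le> 320 * real (sub_dim R) / real d"
    using mU(1) s(2) by (simp add: divide_right_mono)
  finally have B2: "G.prob B2 \<le> 320 * real (sub_dim R) / real d" .
  have "B1 \<in> sets G"
    unfolding B1_def real_card_lessThan_filter G_def by measurable
  moreover have "B2 \<in> sets G"
    unfolding B2_def G_def ip_def by measurable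
  moreover have "E \<in> sets G"
    unfolding E_def G_def by (rule sets_PiM_many_large_perp_proj_coords[OF R mU(2-4)])
  moreover have "space G - (B1 \<union> B2) \<subseteq> E"
  proof
    fix z assume "z \<in> space G - (B1 \<union> B2)"
    then have "z \<in> space G" "(\<Sum>k<m. (ip d (U k) z)\<^sup>2) < 1 / 320"
      "11 / 20 * real d < real (card {i \<in> {..<d}. 1 / (2 * sqrt (real d)) \<le> \<bar>z i\<bar>})"
      unfolding B1_def B2_def s(3) by auto
    then show "z \<in> E"
      unfolding E_def using card_perp_proj_large_coords[OF R mU(2-4) d] by blast
  qed
  ultimately have "1 - G.prob B1 - G.prob B2 \<le> G.prob E"
    by (rule G.prob_ge_one_minus_exceptions)
  moreover have "G.prob B1 \<le> 625 / real d"
    unfolding B1_def G_def by (rule PiM_normal_prob_few_large_coords[OF s(1) d])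
  moreover have "gauss_vec d = G"
    unfolding G_def gauss_vec_def s_def ..
  ultimately show ?thesis
    using B2 unfolding E_def by simp
qed

lemma measure_perp_proj_many_large_coords_low_dim:
  assumes d: "1 \<le> d" and R: "is_subspace d R"
    and dim: "real (sub_dim R) \<le> real d / (16 * (ln (real d))\<^sup>2)"
  shows "1 - 625 / real d - 20 / (ln (real d))\<^sup>2
    \<le> measure (gauss_vec d) {z \<in> space (gauss_vec d).
         d \<le> 2 * card {i \<in> {..<d}. 1 / (4 * sqrt (real d)) \<le> \<bar>perp_proj d R z i\<bar>}}"
proof -
  have "320 * real (sub_dim R) / real d \<le> 320 * (real d / (16 * (ln (real d))\<^sup>2)) / real d"
    using dim by (intro divide_right_mono) auto
  also have "\<dots> = 20 / (ln (real d))\<^sup>2"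
    using d by simp
  finally show ?thesis
    using measure_perp_proj_many_large_coords[OF d R] by linarith
qed

lemma eventually_error_terms_small:
  assumes "\<epsilon> > 0"
  shows "eventually (\<lambda>d. 625 / real d + 20 / (ln (real d))\<^sup>2 < \<epsilon>) sequentially"
proof -
  have "(\<lambda>d. 625 / real d + 20 / (ln (real d))\<^sup>2) \<longlonglongrightarrow> 0"
    by real_asymp
  then show ?thesis
    using assms by (rule order_tendstoD)
qed

theorem lemma14:
  shows "\<forall>\<epsilon>>0. \<exists>D. \<forall>d\<ge>D. \<forall>R. is_subspace d R \<longrightarrow>
           real (sub_dim R) \<le> real d / (16 * (ln (real d))\<^sup>2) \<longrightarrow>
           measure (gauss_vec d)
             {z \<in> space (gauss_vec d).
                2 * card {i\<in>{..<d}. \<bar>perp_proj d R z i\<bar> \<ge> 1 / (4 * sqrt (real d))} \<ge> d}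
             \<ge> 1 - \<epsilon>"
proof (intro allI impI)
  fix \<epsilon> :: real assume "\<epsilon> > 0"
  then obtain D where D: "\<And>d. D \<le> d \<Longrightarrow> 625 / real d + 20 / (ln (real d))\<^sup>2 < \<epsilon> \<and> 1 \<le> d"
    using eventually_conj[OF eventually_error_terms_small eventually_ge_at_top[of 1]]
    unfolding eventually_sequentially by blast
  show "\<exists>D. \<forall>d\<ge>D. \<forall>R. is_subspace d R \<longrightarrow>
           real (sub_dim R) \<le> real d / (16 * (ln (real d))\<^sup>2) \<longrightarrow>
           measure (gauss_vec d)
             {z \<in> space (gauss_vec d).
                2 * card {i\<in>{..<d}. \<bar>perp_proj d R z i\<bar> \<ge> 1 / (4 * sqrt (real d))} \<ge> d}
             \<ge> 1 - \<epsilon>"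
    by (intro exI[of _ D] allI impI, rule order.trans[OF _ measure_perp_proj_many_large_coords_low_dim])
      (use D in \<open>force+\<close>)
qed

end
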